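(* Let $G$ be a finite group, let $N$ be a minimal normal subgroup of $G$, and let $i\ge 1$. If $N$ contains no non-trivial element of $G_{\delta_i}$ (i.e. $N\cap G_{\delta_i}\subseteq\{1\}$), then $[N,G^{(i-1)}]=1$.
   Context: Commutators are $[x,y]=x^{-1}y^{-1}xy$. The derived words $\delta_i$, in $2^i$ indeterminates, are defined by $\delta_0=x_1$ and $\delta_i=[\delta_{i-1}(x_1,\dots,x_{2^{i-1}}),\,\delta_{i-1}(x_{2^{i-1}+1},\dots,x_{2^i})]$ for $i\ge1$. $G_{\delta_i}$ denotes the set of all values of $\delta_i$ in $G$, and $G^{(j)}$ is the $j$th term of the derived series of $G$ ($G^{(0)}=G$, $G^{(j)}=[G^{(j-1)},G^{(j-1)}]$), so that $G^{(j)}=\langle G_{\delta_j}\rangle$. *)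

theory Defs
  imports "HOL-Algebra.Algebra"
begin

definition grp_comm :: "('a, 'b) monoid_scheme \<Rightarrow> 'a \<Rightarrow> 'a \<Rightarrow> 'a" where
  "grp_comm G x y = inv\<^bsub>G\<^esub> x \<otimes>\<^bsub>G\<^esub> inv\<^bsub>G\<^esub> y \<otimes>\<^bsub>G\<^esub> x \<otimes>\<^bsub>G\<^esub> y"

text \<open>Derived word delta_i evaluated at an assignment x of the indeterminates
  x_1, x_2, ... (here indexed from 0: x 0, x 1, ...); delta_i uses x 0 .. x (2^i - 1).\<close>
fun delta_word :: "('a, 'b) monoid_scheme \<Rightarrow> nat \<Rightarrow> (nat \<Rightarrow> 'a) \<Rightarrow> 'a" where
  "delta_word G 0 x = x 0"
| "delta_word G (Suc i) x =
     grp_comm G (delta_word G i x) (delta_word G i (\<lambda>k. x (k + 2 ^ i)))"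

definition delta_values :: "('a, 'b) monoid_scheme \<Rightarrow> nat \<Rightarrow> 'a set" where
  "delta_values G i = {delta_word G i x | x. \<forall>k < 2 ^ i. x k \<in> carrier G}"

definition comm_subgroup :: "('a, 'b) monoid_scheme \<Rightarrow> 'a set \<Rightarrow> 'a set \<Rightarrow> 'a set" where
  "comm_subgroup G A B = generate G {grp_comm G a b | a b. a \<in> A \<and> b \<in> B}"

definition derived_term :: "('a, 'b) monoid_scheme \<Rightarrow> nat \<Rightarrow> 'a set" where
  "derived_term G j = (derived G ^^ j) (carrier G)"

definition minimal_normal :: "'a set \<Rightarrow> ('a, 'b) monoid_scheme \<Rightarrow> bool" where
  "minimal_normal N G \<longleftrightarrow> N \<lhd> G \<and> N \<noteq> {\<one>\<^bsub>G\<^esub>} \<and>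
     (\<forall>M. M \<lhd> G \<and> M \<subseteq> N \<longrightarrow> M = {\<one>\<^bsub>G\<^esub>} \<or> M = N)"

end

theory Submission
  imports Defs
begin

(*
  We show by induction on j that N
  centralises G^(j).  If N meets the values of delta_j non-trivially, say in a,
  then C = N \<inter> C_G(G_delta_j) is normal in G (the set of delta_j-values is closed
  under conjugation) and contains a, because every commutator [a,g] with g a
  delta_j-value lies both in N and among the delta_(j+1)-values; minimality gives
  C = N.  Since G^(j) lies in the subgroup generated by the delta_j-values, N
  centralises G^(j).  Otherwise N \<inter> G_delta_j is trivial, and the induction
  hypothesis gives that N centralises G^(j-1), which contains G^(j).
*)

section \<open>Commutator identities\<close>

context group
begin

lemma mult_inv_cancel_left [simp]:
  "x \<in> carrier G \<Longrightarrow> y \<in> carrier G \<Longrightarrow> x \<otimes> (inv x \<otimes> y) = y"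
  by (simp add: m_assoc[symmetric])

lemma inv_mult_cancel_left [simp]:
  "x \<in> carrier G \<Longrightarrow> y \<in> carrier G \<Longrightarrow> inv x \<otimes> (x \<otimes> y) = y"
  by (simp add: m_assoc[symmetric])

lemma comm_closed [simp]:
  "a \<in> carrier G \<Longrightarrow> b \<in> carrier G \<Longrightarrow> grp_comm G a b \<in> carrier G"
  by (simp add: grp_comm_def)

lemma comm_eq_one_iff:
  assumes "a \<in> carrier G" "b \<in> carrier G"
  shows "grp_comm G a b = \<one> \<longleftrightarrow> a \<otimes> b = b \<otimes> a"
proof -
  have "grp_comm G a b = inv (b \<otimes> a) \<otimes> (a \<otimes> b)"
    using assms by (simp add: grp_comm_def inv_mult_group m_assoc)
  then show ?thesis
    using assms by (metis inv_closed inv_equality m_closed inv_inv r_inv)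
qed

lemma comm_inv:
  "a \<in> carrier G \<Longrightarrow> b \<in> carrier G \<Longrightarrow> inv (grp_comm G a b) = grp_comm G b a"
  by (simp add: grp_comm_def inv_mult_group m_assoc)

lemma comm_mult_left:
  "a \<in> carrier G \<Longrightarrow> b \<in> carrier G \<Longrightarrow> c \<in> carrier G \<Longrightarrow>
    grp_comm G (a \<otimes> b) c = inv b \<otimes> grp_comm G a c \<otimes> b \<otimes> grp_comm G b c"
  by (simp add: grp_comm_def m_assoc inv_mult_group)

lemma comm_inv_left:
  "a \<in> carrier G \<Longrightarrow> c \<in> carrier G \<Longrightarrow>
    grp_comm G (inv a) c = a \<otimes> inv (grp_comm G a c) \<otimes> inv a"
  by (simp add: grp_comm_def m_assoc inv_mult_group)

lemma comm_conj:
  "g \<in> carrier G \<Longrightarrow> a \<in> carrier G \<Longrightarrow> b \<in> carrier G \<Longrightarrow>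
    g \<otimes> grp_comm G a b \<otimes> inv g = grp_comm G (g \<otimes> a \<otimes> inv g) (g \<otimes> b \<otimes> inv g)"
  by (simp add: grp_comm_def m_assoc inv_mult_group)

text \<open>The generators of the derived subgroup in the library are commutators
  of inverses in our convention.\<close>
lemma derived_generator_eq_comm:
  "h1 \<in> carrier G \<Longrightarrow> h2 \<in> carrier G \<Longrightarrow>
    h1 \<otimes> h2 \<otimes> inv h1 \<otimes> inv h2 = grp_comm G (inv h1) (inv h2)"
  by (simp add: grp_comm_def)

lemma comm_in_normal:
  assumes "N \<lhd> G" "a \<in> N" "g \<in> carrier G"
  shows "grp_comm G a g \<in> N"
proof -
  have N: "subgroup N G" using assms(1) by (rule normal_imp_subgroup)
  then have a: "a \<in> carrier G" using assms(2) by (rule subgroup.mem_carrier)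
  have "inv g \<otimes> a \<otimes> g \<in> N" using normal.inv_op_closed1[OF assms(1) assms(3,2)] .
  then have "inv a \<otimes> (inv g \<otimes> a \<otimes> g) \<in> N"
    using N assms(2) by (simp add: subgroup.m_closed subgroup.m_inv_closed)
  then show ?thesis using a assms(3) by (simp add: grp_comm_def m_assoc)
qed

end

section \<open>Centralisers\<close>

definition centralizer :: "('a, 'b) monoid_scheme \<Rightarrow> 'a set \<Rightarrow> 'a set" where
  "centralizer G S = {g \<in> carrier G. \<forall>s \<in> S. g \<otimes>\<^bsub>G\<^esub> s = s \<otimes>\<^bsub>G\<^esub> g}"

context group
begin

lemma subset_centralizer_sym:
  "A \<subseteq> carrier G \<Longrightarrow> B \<subseteq> carrier G \<Longrightarrow> A \<subseteq> centralizer G B \<longleftrightarrow> B \<subseteq> centralizer G A"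
  unfolding centralizer_def by auto

lemma centralizer_subgroup:
  assumes S: "S \<subseteq> carrier G"
  shows "subgroup (centralizer G S) G"
proof (rule subgroupI)
  show "centralizer G S \<subseteq> carrier G"
    unfolding centralizer_def by auto
  have "\<one> \<in> centralizer G S"
    using S unfolding centralizer_def by auto
  then show "centralizer G S \<noteq> {}" by blast
next
  fix g assume g: "g \<in> centralizer G S"
  show "inv g \<in> centralizer G S"
    unfolding centralizer_def
  proof (intro CollectI conjI ballI)
    fix s assume s: "s \<in> S"
    have c: "g \<in> carrier G" "s \<in> carrier G" and gs: "g \<otimes> s = s \<otimes> g"
      using g s S unfolding centralizer_def by auto
    have "inv g \<otimes> (g \<otimes> s) \<otimes> inv g = inv g \<otimes> (s \<otimes> g) \<otimes> inv g" by (simp add: gs)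
    then show "inv g \<otimes> s = s \<otimes> inv g"
      using c by (simp add: m_assoc)
  qed (use g in \<open>auto simp: centralizer_def\<close>)
next
  fix g h assume g: "g \<in> centralizer G S" and h: "h \<in> centralizer G S"
  show "g \<otimes> h \<in> centralizer G S"
    unfolding centralizer_def
  proof (intro CollectI conjI ballI)
    fix s assume s: "s \<in> S"
    have c: "g \<in> carrier G" "h \<in> carrier G" "s \<in> carrier G"
      using g h s S unfolding centralizer_def by auto
    have "g \<otimes> h \<otimes> s = g \<otimes> (s \<otimes> h)"
      using h s c by (simp add: m_assoc centralizer_def)
    also have "\<dots> = s \<otimes> (g \<otimes> h)"
      using g s c by (simp add: m_assoc[symmetric] centralizer_def)
    finally show "g \<otimes> h \<otimes> s = s \<otimes> (g \<otimes> h)" .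
  qed (use g h in \<open>auto simp: centralizer_def\<close>)
qed

lemma centralizer_normal:
  assumes S: "S \<subseteq> carrier G"
    and conj: "\<And>s g. s \<in> S \<Longrightarrow> g \<in> carrier G \<Longrightarrow> g \<otimes> s \<otimes> inv g \<in> S"
  shows "centralizer G S \<lhd> G"
proof (rule normal_invI[OF centralizer_subgroup[OF S]])
  fix g c assume g: "g \<in> carrier G" and c: "c \<in> centralizer G S"
  have cc: "c \<in> carrier G" using c by (simp add: centralizer_def)
  show "g \<otimes> c \<otimes> inv g \<in> centralizer G S"
    unfolding centralizer_def
  proof (intro CollectI conjI ballI)
    fix s assume s: "s \<in> S"
    have sc: "s \<in> carrier G" using s S by auto
    have "inv g \<otimes> s \<otimes> g \<in> S" using conj[OF s inv_closed[OF g]] g by simp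
    then have comm: "c \<otimes> (inv g \<otimes> s \<otimes> g) = (inv g \<otimes> s \<otimes> g) \<otimes> c"
      using c by (simp add: centralizer_def)
    have "g \<otimes> c \<otimes> inv g \<otimes> s = g \<otimes> (c \<otimes> (inv g \<otimes> s \<otimes> g)) \<otimes> inv g"
      using g cc sc by (simp add: m_assoc)
    also have "\<dots> = s \<otimes> (g \<otimes> c \<otimes> inv g)"
      unfolding comm using g cc sc by (simp add: m_assoc)
    finally show "g \<otimes> c \<otimes> inv g \<otimes> s = s \<otimes> (g \<otimes> c \<otimes> inv g)" .
  qed (use g cc in simp)
qed

lemma generate_subset_centralizer:
  "A \<subseteq> carrier G \<Longrightarrow> S \<subseteq> centralizer G A \<Longrightarrow> generate G S \<subseteq> centralizer G A"
  using generate_subgroup_incl[OF _ centralizer_subgroup] by blast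

end

section \<open>Commutators modulo a normal subgroup\<close>

context group
begin

text \<open>For a normal subgroup Q, the elements whose commutator with a fixed x lies in Q
  form a subgroup: it is the preimage of the centraliser of x in G/Q.\<close>
lemma comm_mod_normal_subgroup:
  assumes Q: "Q \<lhd> G" and x: "x \<in> carrier G"
  shows "subgroup {y \<in> carrier G. grp_comm G y x \<in> Q} G"
proof -
  have sQ: "subgroup Q G" using Q by (rule normal_imp_subgroup)
  show ?thesis
  proof (rule subgroupI)
    have "grp_comm G \<one> x = \<one>" using x by (simp add: comm_eq_one_iff)
    then show "{y \<in> carrier G. grp_comm G y x \<in> Q} \<noteq> {}"
      using subgroup.one_closed[OF sQ] by force
  next
    fix y assume y: "y \<in> {y \<in> carrier G. grp_comm G y x \<in> Q}"
    then have "y \<otimes> inv (grp_comm G y x) \<otimes> inv y \<in> Q"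
      using normal.inv_op_closed2[OF Q] subgroup.m_inv_closed[OF sQ] by blast
    then show "inv y \<in> {y \<in> carrier G. grp_comm G y x \<in> Q}"
      using y x by (simp add: comm_inv_left)
  next
    fix y z
    assume y: "y \<in> {y \<in> carrier G. grp_comm G y x \<in> Q}"
      and z: "z \<in> {y \<in> carrier G. grp_comm G y x \<in> Q}"
    then have "inv z \<otimes> grp_comm G y x \<otimes> z \<otimes> grp_comm G z x \<in> Q"
      using normal.inv_op_closed1[OF Q] subgroup.m_closed[OF sQ] by blast
    then show "y \<otimes> z \<in> {y \<in> carrier G. grp_comm G y x \<in> Q}"
      using y z x by (simp add: comm_mult_left)
  qed auto
qed

lemma comm_mod_swap:
  assumes "subgroup Q G" "x \<in> carrier G" "y \<in> carrier G" "grp_comm G x y \<in> Q"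
  shows "grp_comm G y x \<in> Q"
  using subgroup.m_inv_closed[OF assms(1,4)] assms(2,3) by (simp add: comm_inv)

text \<open>If the generators of a subgroup commute modulo a normal subgroup Q, so do all
  its elements; this is how commutators of the derived series are controlled.\<close>
lemma generate_comm_mod_normal:
  assumes Q: "Q \<lhd> G" and D: "D \<subseteq> carrier G"
    and DQ: "\<And>a b. a \<in> D \<Longrightarrow> b \<in> D \<Longrightarrow> grp_comm G a b \<in> Q"
    and a: "a \<in> generate G D" and b: "b \<in> generate G D"
  shows "grp_comm G a b \<in> Q"
proof -
  have sQ: "subgroup Q G" using Q by (rule normal_imp_subgroup)
  have gen_c: "generate G D \<subseteq> carrier G" using generate_in_carrier[OF D] by blast
  have gen_in: "generate G D \<subseteq> {y \<in> carrier G. grp_comm G y x \<in> Q}"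
    if "x \<in> carrier G" "\<And>d. d \<in> D \<Longrightarrow> grp_comm G d x \<in> Q" for x
    using generate_subgroup_incl[OF _ comm_mod_normal_subgroup[OF Q that(1)]] that(2) D by blast
  have "grp_comm G a d \<in> Q" if d: "d \<in> D" for d
    using gen_in[of d] d D DQ a by blast
  then have "grp_comm G d a \<in> Q" if "d \<in> D" for d
    using that a D gen_c comm_mod_swap[OF sQ] by blast
  then have "grp_comm G b a \<in> Q"
    using gen_in[of a] a b gen_c by blast
  then show ?thesis using comm_mod_swap[OF sQ] a b gen_c by blast
qed

end


section \<open>Values of the derived words\<close>

lemma delta_word_cong:
  "(\<And>k. k < 2 ^ i \<Longrightarrow> x k = y k) \<Longrightarrow> delta_word G i x = delta_word G i y"
proof (induction i arbitrary: x y)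
  case 0
  then show ?case by simp
next
  case (Suc i)
  have "delta_word G i x = delta_word G i y"
    by (rule Suc.IH) (simp add: Suc.prems)
  moreover have "delta_word G i (\<lambda>k. x (k + 2 ^ i)) = delta_word G i (\<lambda>k. y (k + 2 ^ i))"
    by (rule Suc.IH) (simp add: Suc.prems)
  ultimately show ?case by simp
qed

text \<open>Two values of delta_i, on disjoint blocks of indeterminates, combine into a
  value of delta_(i+1): the commutator of delta_i-values is a delta_(i+1)-value.\<close>
lemma delta_values_comm:
  assumes "a \<in> delta_values G i" "b \<in> delta_values G i"
  shows "grp_comm G a b \<in> delta_values G (Suc i)"
proof -
  obtain x y where x: "\<forall>k<2^i. x k \<in> carrier G" "a = delta_word G i x"
    and y: "\<forall>k<2^i. y k \<in> carrier G" "b = delta_word G i y"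
    using assms unfolding delta_values_def by blast
  define z where "z = (\<lambda>k. if k < 2 ^ i then x k else y (k - 2 ^ i))"
  have "delta_word G i z = a"
    unfolding x(2) by (rule delta_word_cong) (simp add: z_def)
  moreover have "delta_word G i (\<lambda>k. z (k + 2 ^ i)) = b"
    unfolding y(2) by (rule delta_word_cong) (simp add: z_def)
  moreover have "\<forall>k<2 ^ Suc i. z k \<in> carrier G"
    using x(1) y(1) by (auto simp: z_def)
  ultimately show ?thesis
    unfolding delta_values_def by (intro CollectI exI[of _ z]) simp
qed

context group
begin

lemma delta_word_closed:
  "(\<forall>k<2^i. x k \<in> carrier G) \<Longrightarrow> delta_word G i x \<in> carrier G"
proof (induction i arbitrary: x)
  case 0
  then show ?case by simp
next
  case (Suc i)
  have "delta_word G i x \<in> carrier G" "delta_word G i (\<lambda>k. x (k + 2^i)) \<in> carrier G"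
    using Suc by simp_all
  then show ?case by simp
qed

lemma delta_values_subset_carrier: "delta_values G i \<subseteq> carrier G"
  unfolding delta_values_def using delta_word_closed by blast

lemma delta_values_0: "delta_values G 0 = carrier G"
proof
  show "carrier G \<subseteq> delta_values G 0"
  proof
    fix g assume "g \<in> carrier G"
    then show "g \<in> delta_values G 0"
      unfolding delta_values_def by (intro CollectI exI[of _ "\<lambda>_. g"]) simp
  qed
qed (rule delta_values_subset_carrier)

lemma delta_word_conj:
  "g \<in> carrier G \<Longrightarrow> (\<forall>k<2^i. x k \<in> carrier G) \<Longrightarrow>
    g \<otimes> delta_word G i x \<otimes> inv g = delta_word G i (\<lambda>k. g \<otimes> x k \<otimes> inv g)"
proof (induction i arbitrary: x)
  case 0
  then show ?case by simp
next
  case (Suc i)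
  have x1: "\<forall>k<2^i. x k \<in> carrier G" and x2: "\<forall>k<2^i. x (k + 2^i) \<in> carrier G"
    using Suc.prems by simp_all
  show ?case
    using comm_conj[OF Suc.prems(1) delta_word_closed[OF x1] delta_word_closed[OF x2]]
      Suc.IH[OF Suc.prems(1) x1] Suc.IH[OF Suc.prems(1) x2]
    by simp
qed

lemma delta_values_conj:
  assumes "d \<in> delta_values G i" "g \<in> carrier G"
  shows "g \<otimes> d \<otimes> inv g \<in> delta_values G i"
proof -
  obtain x where x: "\<forall>k<2^i. x k \<in> carrier G" "d = delta_word G i x"
    using assms(1) unfolding delta_values_def by blast
  show ?thesis
    unfolding delta_values_def x(2) delta_word_conj[OF assms(2) x(1)]
    using x(1) assms(2) by (intro CollectI exI[of _ "\<lambda>k. g \<otimes> x k \<otimes> inv g"]) auto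
qed

lemma generate_delta_values_normal: "generate G (delta_values G i) \<lhd> G"
  by (rule normal_generateI[OF delta_values_subset_carrier delta_values_conj])

text \<open>The i-th derived subgroup lies in the subgroup generated by the delta_i-values
  (in fact they are equal, but only this inclusion is needed).\<close>
lemma derived_term_subset_generate_delta:
  "derived_term G i \<subseteq> generate G (delta_values G i)"
proof (induction i)
  case 0
  then show ?case by (auto simp: derived_term_def delta_values_0 intro: generate.incl)
next
  case (Suc i)
  let ?H = "derived_term G i" and ?D = "delta_values G i"
  have H: "?H \<subseteq> carrier G"
    unfolding derived_term_def by (rule exp_of_derived_in_carrier[OF subset_refl])
  have eq: "derived_term G (Suc i) = generate G (derived_set G ?H)"
    by (simp add: derived_term_def derived_def)
  have "derived_set G ?H \<subseteq> generate G (delta_values G (Suc i))"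
  proof clarify
    fix h1 h2 assume h: "h1 \<in> ?H" "h2 \<in> ?H"
    then have "inv h1 \<in> generate G ?D" "inv h2 \<in> generate G ?D"
      using Suc.IH generate_m_inv_closed[OF delta_values_subset_carrier] by auto
    then have "grp_comm G (inv h1) (inv h2) \<in> generate G (delta_values G (Suc i))"
      using generate_comm_mod_normal[OF generate_delta_values_normal delta_values_subset_carrier]
      by (blast intro: generate.incl delta_values_comm)
    moreover have "h1 \<otimes> h2 \<otimes> inv h1 \<otimes> inv h2 = grp_comm G (inv h1) (inv h2)"
      using h H by (intro derived_generator_eq_comm) auto
    ultimately show "h1 \<otimes> h2 \<otimes> inv h1 \<otimes> inv h2 \<in> generate G (delta_values G (Suc i))"
      by (simp only:)
  qed
  then show ?case
    unfolding eq by (rule generate_subgroup_incl[OF _ generate_is_subgroup[OF delta_values_subset_carrier]])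
qed

end


section \<open>Minimal normal subgroups avoiding the delta-values\<close>

context group
begin

lemma minimal_normal_subset_carrier: "minimal_normal N G \<Longrightarrow> N \<subseteq> carrier G"
  unfolding minimal_normal_def using normal_imp_subgroup subgroup.subset by blast

lemma derived_term_Suc_subset: "derived_term G (Suc i) \<subseteq> derived_term G i"
  unfolding derived_term_def funpow.simps comp_def
  by (rule derived_incl[OF subset_refl exp_of_derived_is_subgroup[OF subgroup_self]])

lemma comm_subgroup_trivial:
  assumes "A \<subseteq> carrier G" "B \<subseteq> centralizer G A"
  shows "comm_subgroup G A B = {\<one>}"
proof -
  have "{grp_comm G a b | a b. a \<in> A \<and> b \<in> B} \<subseteq> {\<one>}"
  proof clarify
    fix a b assume "a \<in> A" "b \<in> B"
    then have "a \<in> carrier G" "b \<in> carrier G" "b \<otimes> a = a \<otimes> b"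
      using assms unfolding centralizer_def by auto
    then show "grp_comm G a b = \<one>" by (simp add: comm_eq_one_iff)
  qed
  then have "comm_subgroup G A B \<subseteq> {\<one>}"
    unfolding comm_subgroup_def by (rule generate_subgroup_incl[OF _ triv_subgroup])
  moreover have "\<one> \<in> comm_subgroup G A B"
    unfolding comm_subgroup_def by (rule generate.one)
  ultimately show ?thesis by blast
qed

text \<open>If a minimal normal subgroup N contains a non-trivial delta_k-value
  but no non-trivial delta_(k+1)-value, then N centralises all delta_k-values:
  the elements of N doing so form a normal subgroup containing that value.\<close>
lemma minimal_normal_centralizes_delta_values:
  assumes mn: "minimal_normal N G"
    and a: "a \<in> N" "a \<in> delta_values G k" "a \<noteq> \<one>"
    and avoid: "N \<inter> delta_values G (Suc k) \<subseteq> {\<one>}"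
  shows "N \<subseteq> centralizer G (delta_values G k)"
proof -
  let ?D = "delta_values G k"
  have nN: "N \<lhd> G" using mn by (simp add: minimal_normal_def)
  have aG: "a \<in> carrier G" using a(2) delta_values_subset_carrier by blast
  have "a \<in> centralizer G ?D"
    unfolding centralizer_def
  proof (intro CollectI conjI ballI aG)
    fix g assume g: "g \<in> ?D"
    then have gG: "g \<in> carrier G" using delta_values_subset_carrier by blast
    have "grp_comm G a g \<in> N \<inter> delta_values G (Suc k)"
      using comm_in_normal[OF nN a(1) gG] delta_values_comm[OF a(2) g] by blast
    then have "grp_comm G a g = \<one>" using avoid by blast
    then show "a \<otimes> g = g \<otimes> a" using aG gG by (simp add: comm_eq_one_iff)
  qed
  moreover have "N \<inter> centralizer G ?D \<lhd> G"
    by (rule normal_subgroup_intersect[OF nN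
          centralizer_normal[OF delta_values_subset_carrier delta_values_conj]])
  ultimately have "N \<inter> centralizer G ?D = N"
    using mn a(1,3) unfolding minimal_normal_def by blast
  then show ?thesis by blast
qed

lemma centralizes_derived_term:
  assumes "N \<subseteq> carrier G" "N \<subseteq> centralizer G (delta_values G k)"
  shows "derived_term G k \<subseteq> centralizer G N"
proof -
  have "delta_values G k \<subseteq> centralizer G N"
    using assms subset_centralizer_sym[OF _ delta_values_subset_carrier] by blast
  then have "generate G (delta_values G k) \<subseteq> centralizer G N"
    by (rule generate_subset_centralizer[OF assms(1)])
  then show ?thesis using derived_term_subset_generate_delta by blast
qed

text \<open>Either N meets the delta_j-values non-trivially (key step),
  or the induction hypothesis applies to the larger group G^(j-1).\<close>
lemma minimal_normal_centralized_by_derived_term: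
  assumes mn: "minimal_normal N G"
  shows "N \<inter> delta_values G (Suc j) \<subseteq> {\<one>} \<Longrightarrow> derived_term G j \<subseteq> centralizer G N"
proof (induction j)
  case 0
  have nN: "N \<lhd> G" and "N \<noteq> {\<one>}" using mn by (simp_all add: minimal_normal_def)
  moreover have "\<one> \<in> N" using subgroup.one_closed[OF normal_imp_subgroup[OF nN]] .
  ultimately obtain a where a: "a \<in> N" "a \<noteq> \<one>" by blast
  have NG: "N \<subseteq> carrier G" using mn by (rule minimal_normal_subset_carrier)
  then have "a \<in> delta_values G 0" using a(1) delta_values_0 by blast
  then show ?case
    using centralizes_derived_term[OF NG
        minimal_normal_centralizes_delta_values[OF mn a(1) _ a(2) "0.prems"]] by blast
next
  case (Suc j)
  have NG: "N \<subseteq> carrier G" using mn by (rule minimal_normal_subset_carrier)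
  show ?case
  proof (cases "N \<inter> delta_values G (Suc j) \<subseteq> {\<one>}")
    case True
    then show ?thesis using Suc.IH derived_term_Suc_subset by blast
  next
    case False
    then obtain a where "a \<in> N" "a \<in> delta_values G (Suc j)" "a \<noteq> \<one>" by blast
    then show ?thesis
      using centralizes_derived_term[OF NG
          minimal_normal_centralizes_delta_values[OF mn _ _ _ Suc.prems]] by blast
  qed
qed

end

theorem lemma1p3:
  fixes G :: "('a, 'b) monoid_scheme" and N :: "'a set" and i :: nat
  assumes "group G"
    and "finite (carrier G)"
    and "minimal_normal N G"
    and "i \<ge> 1"
    and "N \<inter> delta_values G i \<subseteq> {\<one>\<^bsub>G\<^esub>}"
  shows "comm_subgroup G N (derived_term G (i - 1)) = {\<one>\<^bsub>G\<^esub>}"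
proof -
  interpret group G by (rule assms(1))
  have "Suc (i - 1) = i" using assms(4) by simp
  then have "derived_term G (i - 1) \<subseteq> centralizer G N"
    using minimal_normal_centralized_by_derived_term[OF assms(3)] assms(5) by metis
  moreover have "N \<subseteq> carrier G"
    using assms(3) by (rule minimal_normal_subset_carrier)
  ultimately show ?thesis by (rule comm_subgroup_trivial[rotated])
qed

end
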